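(* Let $\mathcal C\subset\mathbb{R}^P$ be a compact convex set containing the origin as an interior point, and let $G=\gamma_{\mathcal C}$ be its gauge. Then there exists a constant $L_2>0$, independent of $y$, such that for any $\theta>0$, $\theta'>0$ and any $y\in\mathbb{R}^P$, $$\|\mathrm{Prox}_{\theta G}(y)-\mathrm{Prox}_{\theta' G}(y)\|\le L_2|\theta-\theta'|;$$ i.e. for any $y$, $\theta\mapsto\mathrm{Prox}_{\theta G}(y)$ is Lipschitz continuous on $]0,+\infty[$.
   Context: The gauge of a non-empty closed convex set $\mathcal C$ containing the origin is $\gamma_{\mathcal C}(y)=\inf\{\omega>0: y\in\omega\mathcal C\}$ (with $+\infty$ if the set is empty). $\mathrm{Prox}_{G}(y)=\operatorname{argmin}_z\frac12\|z-y\|^2+G(z)$. *)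

theory Defs
  imports "HOL-Analysis.Analysis"
begin

definition gauge_fn :: "'a::real_vector set \<Rightarrow> 'a \<Rightarrow> ereal" where
  "gauge_fn C y = (INF \<omega>\<in>{\<omega>::real. \<omega> > 0 \<and> y \<in> (\<lambda>c. \<omega> *\<^sub>R c) ` C}. ereal \<omega>)"

definition prox :: "('a::real_normed_vector \<Rightarrow> ereal) \<Rightarrow> 'a \<Rightarrow> 'a" where
  "prox G y = (THE z. \<forall>w. ereal ((1/2) * (norm (z - y))\<^sup>2) + G z
                         \<le> ereal ((1/2) * (norm (w - y))\<^sup>2) + G w)"

end

theory Submission imports Defs begin

text \<open>
  The gauge of a convex set that contains a ball of radius \<open>r\<close> about the origin is a
  finite, nonnegative, convex and \<open>1/r\<close>-Lipschitz function. For a convex function \<open>h\<close>, the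
  minimizer \<open>p\<close> of \<open>1/2 \<parallel>z - y\<parallel>\<^sup>2 + \<theta> h z\<close> is characterised by the variational inequality
  \<open>\<langle>p - y, w - p\<rangle> + \<theta> (h w - h p) \<ge> 0\<close> for all \<open>w\<close>. Adding the inequalities for the minimizers
  \<open>p\<close>, \<open>q\<close> at \<open>\<theta>\<close>, \<open>\<theta>'\<close>, each tested at the other point, gives
  \<open>\<parallel>p - q\<parallel>\<^sup>2 \<le> (\<theta> - \<theta>') (h q - h p) \<le> \<bar>\<theta> - \<theta>'\<bar> \<parallel>p - q\<parallel> / r\<close>.
\<close>

definition gauge_scalings :: "'a::real_vector set \<Rightarrow> 'a \<Rightarrow> real set" where
  "gauge_scalings C z = {\<omega>. \<omega> > 0 \<and> z \<in> (\<lambda>c. \<omega> *\<^sub>R c) ` C}"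

definition minkowski_gauge :: "'a::real_vector set \<Rightarrow> 'a \<Rightarrow> real" where
  "minkowski_gauge C z = Inf (gauge_scalings C z)"

locale convex_absorbing =
  fixes C :: "'a::real_normed_vector set" and r :: real
  assumes convex: "convex C" and radius_pos: "r > 0" and cball_subset: "cball 0 r \<subseteq> C"
begin

lemma mem_gauge_scalings:
  assumes "\<omega> > 0" "norm z \<le> \<omega> * r"
  shows "\<omega> \<in> gauge_scalings C z"
proof -
  have "z /\<^sub>R \<omega> \<in> C"
    using assms cball_subset by (auto simp: divide_simps mult.commute)
  moreover have "z = \<omega> *\<^sub>R (z /\<^sub>R \<omega>)"
    using assms by simp
  ultimately show ?thesis
    using assms unfolding gauge_scalings_def by blast
qed

lemma gauge_scalings_nonempty: "gauge_scalings C z \<noteq> {}"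
proof -
  have "norm z / r + 1 \<in> gauge_scalings C z"
    by (rule mem_gauge_scalings) (use radius_pos in \<open>auto simp: field_simps add_pos_nonneg\<close>)
  then show ?thesis by blast
qed

lemma bdd_below_gauge_scalings: "bdd_below (gauge_scalings C z)"
  unfolding gauge_scalings_def by (rule bdd_belowI[of _ 0]) auto

lemma minkowski_gauge_le:
  "\<omega> \<in> gauge_scalings C z \<Longrightarrow> minkowski_gauge C z \<le> \<omega>"
  unfolding minkowski_gauge_def by (rule cInf_lower[OF _ bdd_below_gauge_scalings])

lemma minkowski_gauge_greatest:
  "(\<And>\<omega>. \<omega> \<in> gauge_scalings C z \<Longrightarrow> x \<le> \<omega>) \<Longrightarrow> x \<le> minkowski_gauge C z"
  unfolding minkowski_gauge_def by (rule cInf_greatest[OF gauge_scalings_nonempty])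

lemma gauge_fn_eq_minkowski_gauge: "gauge_fn C z = ereal (minkowski_gauge C z)"
proof -
  have "gauge_fn C z = Inf (ereal ` gauge_scalings C z)"
    unfolding gauge_fn_def gauge_scalings_def by simp
  then show ?thesis
    unfolding minkowski_gauge_def
    using ereal_Inf'[OF bdd_below_gauge_scalings gauge_scalings_nonempty] by simp
qed

lemma minkowski_gauge_nonneg: "minkowski_gauge C z \<ge> 0"
  by (rule minkowski_gauge_greatest) (auto simp: gauge_scalings_def)

lemma minkowski_gauge_le_norm: "minkowski_gauge C z \<le> norm z / r"
proof (rule dense_ge)
  fix \<omega> assume \<omega>: "norm z / r < \<omega>"
  have "0 \<le> norm z / r"
    using radius_pos by simp
  then have "\<omega> > 0"
    using \<omega> by linarith
  moreover have "norm z \<le> \<omega> * r"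
    using \<omega> radius_pos by (simp add: field_simps)
  ultimately show "minkowski_gauge C z \<le> \<omega>"
    by (intro minkowski_gauge_le mem_gauge_scalings)
qed

lemma gauge_scalings_add:
  assumes "a \<in> gauge_scalings C u" "b \<in> gauge_scalings C v"
  shows "a + b \<in> gauge_scalings C (u + v)"
proof -
  obtain c d where cd: "c \<in> C" "d \<in> C" "u = a *\<^sub>R c" "v = b *\<^sub>R d" "a > 0" "b > 0"
    using assms unfolding gauge_scalings_def by blast
  have "(a/(a+b)) *\<^sub>R c + (b/(a+b)) *\<^sub>R d \<in> C"
    using cd by (intro convexD[OF convex]) (auto simp: add_divide_distrib[symmetric])
  moreover have "u + v = (a+b) *\<^sub>R ((a/(a+b)) *\<^sub>R c + (b/(a+b)) *\<^sub>R d)"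
    using cd by (simp add: scaleR_add_right)
  ultimately show ?thesis
    using cd unfolding gauge_scalings_def by force
qed

lemma minkowski_gauge_triangle:
  "minkowski_gauge C (u + v) \<le> minkowski_gauge C u + minkowski_gauge C v"
proof -
  have "minkowski_gauge C (u + v) - minkowski_gauge C u \<le> b"
    if b: "b \<in> gauge_scalings C v" for b
  proof -
    have "minkowski_gauge C (u + v) - b \<le> minkowski_gauge C u"
    proof (rule minkowski_gauge_greatest)
      fix a assume "a \<in> gauge_scalings C u"
      then have "minkowski_gauge C (u + v) \<le> a + b"
        using gauge_scalings_add b minkowski_gauge_le by blast
      then show "minkowski_gauge C (u + v) - b \<le> a"
        by simp
    qed
    then show ?thesis by simp
  qed
  then have "minkowski_gauge C (u + v) - minkowski_gauge C u \<le> minkowski_gauge C v"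
    by (rule minkowski_gauge_greatest)
  then show ?thesis by simp
qed

lemma minkowski_gauge_scaleR_le:
  assumes "t > 0"
  shows "minkowski_gauge C (t *\<^sub>R u) \<le> t * minkowski_gauge C u"
proof -
  have "minkowski_gauge C (t *\<^sub>R u) / t \<le> minkowski_gauge C u"
  proof (rule minkowski_gauge_greatest)
    fix a assume "a \<in> gauge_scalings C u"
    then obtain c where "c \<in> C" "u = a *\<^sub>R c" "a > 0"
      unfolding gauge_scalings_def by blast
    then have "t * a \<in> gauge_scalings C (t *\<^sub>R u)"
      using assms unfolding gauge_scalings_def by force
    then show "minkowski_gauge C (t *\<^sub>R u) / t \<le> a"
      using assms minkowski_gauge_le by (simp add: field_simps)
  qed
  then show ?thesis
    using assms by (simp add: field_simps)
qed

lemma convex_on_minkowski_gauge: "convex_on UNIV (minkowski_gauge C)"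
proof (rule convex_onI)
  fix t :: real and u v assume "0 < t" "t < 1"
  then show "minkowski_gauge C ((1 - t) *\<^sub>R u + t *\<^sub>R v)
      \<le> (1 - t) * minkowski_gauge C u + t * minkowski_gauge C v"
    using minkowski_gauge_triangle[of "(1 - t) *\<^sub>R u" "t *\<^sub>R v"]
      minkowski_gauge_scaleR_le[of "1 - t" u] minkowski_gauge_scaleR_le[of t v]
    by simp
qed simp

lemma lipschitz_on_minkowski_gauge: "(1/r)-lipschitz_on UNIV (minkowski_gauge C)"
proof (rule lipschitz_onI)
  have one_sided: "minkowski_gauge C x - minkowski_gauge C z \<le> norm (x - z) / r" for x z
    using minkowski_gauge_triangle[of z "x - z"] minkowski_gauge_le_norm[of "x - z"] by simp
  then show "dist (minkowski_gauge C x) (minkowski_gauge C z) \<le> 1 / r * dist x z" for x z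
    using one_sided[of x z] one_sided[of z x] by (simp add: dist_norm abs_le_iff norm_minus_commute)
qed (use radius_pos in simp)

end

definition is_prox_point :: "('a::real_normed_vector \<Rightarrow> real) \<Rightarrow> 'a \<Rightarrow> 'a \<Rightarrow> bool" where
  "is_prox_point h y p \<longleftrightarrow>
     (\<forall>w. (1/2) * (norm (p - y))\<^sup>2 + h p \<le> (1/2) * (norm (w - y))\<^sup>2 + h w)"

lemma power2_norm_add_scaleR:
  fixes a b :: "'a::real_inner"
  shows "(norm (a + t *\<^sub>R b))\<^sup>2 = (norm a)\<^sup>2 + 2 * t * (a \<bullet> b) + t\<^sup>2 * (norm b)\<^sup>2"
  unfolding power2_norm_eq_inner
  by (simp add: inner_add_left inner_add_right inner_commute algebra_simps power2_eq_square)

lemma prox_point_variational_inequality: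
  fixes h :: "'a::real_inner \<Rightarrow> real"
  assumes "convex_on UNIV h" and "is_prox_point h y p"
  shows "(p - y) \<bullet> (w - p) + (h w - h p) \<ge> 0"
proof -
  define a where "a = (p - y) \<bullet> (w - p) + (h w - h p)"
  define n where "n = (norm (w - p))\<^sup>2"
  have along_segment: "0 \<le> a + t/2 * n" if t: "0 < t" "t \<le> 1" for t
  proof -
    have segment_point: "(1 - t) *\<^sub>R p + t *\<^sub>R w = p + t *\<^sub>R (w - p)"
      by (simp add: algebra_simps)
    have "(1/2) * (norm (p - y))\<^sup>2 + h p
        \<le> (1/2) * (norm ((p - y) + t *\<^sub>R (w - p)))\<^sup>2 + h ((1 - t) *\<^sub>R p + t *\<^sub>R w)"
      using assms(2) unfolding is_prox_point_def segment_point diff_add_eq by blast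
    also have "\<dots> \<le> (1/2) * (norm ((p - y) + t *\<^sub>R (w - p)))\<^sup>2 + ((1 - t) * h p + t * h w)"
      using convex_onD[OF assms(1), of t p w] t by simp
    also have "\<dots> = (1/2) * (norm (p - y))\<^sup>2 + h p + t * a + t\<^sup>2 / 2 * n"
      unfolding power2_norm_add_scaleR a_def n_def by (simp add: algebra_simps)
    finally have "0 \<le> t * (a + t/2 * n)"
      by (simp add: algebra_simps power2_eq_square)
    then show ?thesis
      using t by (simp add: zero_le_mult_iff)
  qed
  \<comment> \<open>let \<open>t \<rightarrow> 0\<close> in \<open>along_segment\<close>\<close>
  have "- a \<le> 0 + e" if e: "e > 0" for e
  proof -
    define t where "t = min 1 (2 * e / (n + 1))"
    have t: "0 < t" "t \<le> 1"
      unfolding t_def n_def using e by (auto intro!: divide_pos_pos add_nonneg_pos)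
    have "n \<ge> 0"
      unfolding n_def by simp
    have "t/2 * n \<le> (2 * e / (n + 1)) / 2 * n"
      unfolding t_def using \<open>n \<ge> 0\<close> by (intro mult_right_mono divide_right_mono) auto
    also have "\<dots> = e * (n / (n + 1))"
      using \<open>n \<ge> 0\<close> by (simp add: field_simps)
    also have "\<dots> \<le> e"
      using e \<open>n \<ge> 0\<close> by (intro mult_left_le) auto
    finally show ?thesis
      using along_segment[OF t] by simp
  qed
  then show ?thesis
    unfolding a_def[symmetric] using field_le_epsilon[of "- a" 0] by simp
qed

lemma prox_point_quadratic_growth:
  fixes h :: "'a::real_inner \<Rightarrow> real"
  assumes "convex_on UNIV h" and "is_prox_point h y p"
  shows "(1/2) * (norm (p - y))\<^sup>2 + h p + (1/2) * (norm (w - p))\<^sup>2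
           \<le> (1/2) * (norm (w - y))\<^sup>2 + h w"
proof -
  have "(norm (w - y))\<^sup>2 = (norm (p - y))\<^sup>2 + 2 * ((p - y) \<bullet> (w - p)) + (norm (w - p))\<^sup>2"
    using power2_norm_add_scaleR[of "p - y" 1 "w - p"] by simp
  then show ?thesis
    using prox_point_variational_inequality[OF assms, of w] by (simp add: algebra_simps)
qed

lemma prox_point_unique:
  fixes h :: "'a::real_inner \<Rightarrow> real"
  assumes "convex_on UNIV h" "is_prox_point h y p" "is_prox_point h y q"
  shows "q = p"
proof -
  have "(1/2) * (norm (q - y))\<^sup>2 + h q \<le> (1/2) * (norm (p - y))\<^sup>2 + h p"
    using assms(3) unfolding is_prox_point_def by blast
  then have "(norm (q - p))\<^sup>2 \<le> 0"
    using prox_point_quadratic_growth[OF assms(1,2), of q] by linarith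
  then show ?thesis by simp
qed

lemma prox_point_exists:
  fixes h :: "'a::euclidean_space \<Rightarrow> real"
  assumes cont: "continuous_on UNIV h" and nonneg: "\<And>z. h z \<ge> 0"
  shows "\<exists>p. is_prox_point h y p"
proof -
  define f where "f z = (1/2) * (norm (z - y))\<^sup>2 + h z" for z
  define R where "R = sqrt (2 * h y)"
  have "continuous_on (cball y R) f"
    unfolding f_def by (intro continuous_intros continuous_on_subset[OF cont]) auto
  moreover have "R \<ge> 0"
    unfolding R_def using nonneg[of y] by simp
  ultimately obtain p where p: "\<forall>w\<in>cball y R. f p \<le> f w"
    using continuous_attains_inf[OF compact_cball, of y R f] by auto
  have "f p \<le> f y"
    using p \<open>R \<ge> 0\<close> by simp
  have "f p \<le> f w" for w
  proof (cases "w \<in> cball y R")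
    case False
    then have "R < norm (w - y)"
      by (simp add: dist_norm norm_minus_commute)
    then have "R\<^sup>2 < (norm (w - y))\<^sup>2"
      using \<open>R \<ge> 0\<close> by (rule power_strict_mono) simp
    then have "2 * h y < (norm (w - y))\<^sup>2"
      using nonneg[of y] unfolding R_def by simp
    then have "f y \<le> f w"
      using nonneg[of w] unfolding f_def by simp
    then show ?thesis
      using \<open>f p \<le> f y\<close> by simp
  qed (use p in blast)
  then show ?thesis
    unfolding is_prox_point_def f_def by blast
qed

lemma is_prox_point_prox:
  fixes h :: "'a::euclidean_space \<Rightarrow> real"
  assumes "convex_on UNIV h" "continuous_on UNIV h" "\<And>z. h z \<ge> 0"
  shows "is_prox_point h y (prox (\<lambda>z. ereal (h z)) y)"
proof -
  have "prox (\<lambda>z. ereal (h z)) y = (THE p. is_prox_point h y p)"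
    unfolding prox_def is_prox_point_def by simp
  moreover have "\<exists>!p. is_prox_point h y p"
    using prox_point_exists[OF assms(2,3)] prox_point_unique[OF assms(1)] by blast
  ultimately show ?thesis
    by (simp add: theI')
qed

lemma prox_point_lipschitz_in_scale:
  fixes h :: "'a::real_inner \<Rightarrow> real"
  assumes convex: "convex_on UNIV h" and lipschitz: "L-lipschitz_on UNIV h"
    and "\<theta> \<ge> 0" "\<theta>' \<ge> 0"
    and p: "is_prox_point (\<lambda>z. \<theta> * h z) y p" and q: "is_prox_point (\<lambda>z. \<theta>' * h z) y q"
  shows "norm (p - q) \<le> L * \<bar>\<theta> - \<theta>'\<bar>"
proof -
  have "(p - y) \<bullet> (q - p) + \<theta> * (h q - h p) \<ge> 0"
    using prox_point_variational_inequality[OF convex_on_cmul[OF \<open>\<theta> \<ge> 0\<close> convex] p]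
    by (simp add: algebra_simps)
  moreover have "(q - y) \<bullet> (p - q) + \<theta>' * (h p - h q) \<ge> 0"
    using prox_point_variational_inequality[OF convex_on_cmul[OF \<open>\<theta>' \<ge> 0\<close> convex] q]
    by (simp add: algebra_simps)
  moreover have "(p - y) \<bullet> (q - p) + (q - y) \<bullet> (p - q) = - (norm (p - q))\<^sup>2"
    by (simp add: power2_norm_eq_inner inner_diff_left inner_diff_right inner_commute
        algebra_simps)
  ultimately have "(norm (p - q))\<^sup>2 \<le> (\<theta> - \<theta>') * (h q - h p)"
    by (simp add: algebra_simps)
  also have "\<dots> \<le> \<bar>\<theta> - \<theta>'\<bar> * \<bar>h q - h p\<bar>"
    by (simp add: abs_mult[symmetric])
  also have "\<dots> \<le> \<bar>\<theta> - \<theta>'\<bar> * (L * norm (p - q))"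
    using lipschitz_on_normD[OF lipschitz, of q p]
    by (intro mult_left_mono) (auto simp: norm_minus_commute)
  finally have "norm (p - q) * norm (p - q) \<le> norm (p - q) * (L * \<bar>\<theta> - \<theta>'\<bar>)"
    by (simp add: power2_eq_square algebra_simps)
  then show ?thesis
    using lipschitz_on_nonneg[OF lipschitz]
    by (cases "norm (p - q) = 0") (auto simp: mult_le_cancel_left_pos)
qed

theorem proposition5:
  fixes C :: "'a::euclidean_space set"
  assumes "compact C" and "convex C" and "0 \<in> interior C"
  shows "\<exists>L2>0. \<forall>\<theta>>0. \<forall>\<theta>'>0. \<forall>y::'a.
           norm (prox (\<lambda>z. ereal \<theta> * gauge_fn C z) y - prox (\<lambda>z. ereal \<theta>' * gauge_fn C z) y)
             \<le> L2 * \<bar>\<theta> - \<theta>'\<bar>"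
proof -
  obtain r where "r > 0" "cball 0 r \<subseteq> C"
    using assms(3) mem_interior_cball by blast
  then interpret convex_absorbing C r
    using assms(2) by unfold_locales
  let ?g = "minkowski_gauge C"
  have prox_gauge: "is_prox_point (\<lambda>z. \<theta> * ?g z) y (prox (\<lambda>z. ereal \<theta> * gauge_fn C z) y)"
    if "\<theta> > 0" for \<theta> y
    using is_prox_point_prox[of "\<lambda>z. \<theta> * ?g z" y] that convex_on_minkowski_gauge
      lipschitz_on_continuous_on[OF lipschitz_on_minkowski_gauge] minkowski_gauge_nonneg
    by (simp add: gauge_fn_eq_minkowski_gauge continuous_intros convex_on_cmul)
  have "norm (prox (\<lambda>z. ereal \<theta> * gauge_fn C z) y - prox (\<lambda>z. ereal \<theta>' * gauge_fn C z) y)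
      \<le> 1/r * \<bar>\<theta> - \<theta>'\<bar>" if "\<theta> > 0" "\<theta>' > 0" for \<theta> \<theta>' y
    by (rule prox_point_lipschitz_in_scale[OF convex_on_minkowski_gauge
        lipschitz_on_minkowski_gauge _ _ prox_gauge[of \<theta> y] prox_gauge[of \<theta>' y]])
      (use that in auto)
  then show ?thesis
    using radius_pos by (intro exI[of _ "1/r"]) auto
qed

end
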